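(* Let $H=(V,E)$ be a capacitated hypergraph, let $v_1,\ldots,v_n$ be a tight ordering for $H$, and let $G=(V,E')$ be the corresponding tight graph. Then for all $1\le i<j\le n$, $d'(V_i,v_j;G)=d'(V_i,v_j;H)$.
   Context: A hypergraph $H=(V,E)$ has finite vertex set $V$, a finite multiset $E$ of edges (subsets of $V$), and capacities $c:E\to\mathbb{R}_{\ge0}$. For disjoint $A,B\subseteq V$, $d'(A,B;H)$ is the total capacity of edges $e$ with $e\cap A\ne\emptyset$, $e\cap B\ne\emptyset$ and $e\subseteq A\cup B$ (a vertex $v$ stands for $\{v\}$). For an ordering $v_1,\ldots,v_n$, $V_i=\{v_1,\ldots,v_i\}$ ($V_0=\emptyset$); it is a tight ordering if $d'(V_{i-1},v_i;H)\ge d'(V_{i-1},v_j;H)$ for all $1\le i<j\le n$. The tight graph $G=(V,E')$ with respect to $H$ and this ordering has, for each $e\in E$, an edge $e'$ of capacity $c(e)$ consisting of the last two vertices of $e$ in the ordering (the last $\min(2,|e|)$ vertices). *)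

theory Defs
  imports Main "HOL.Real"
begin

text \<open>A capacitated hypergraph (V, E, c): the finite multiset E of edges is represented
by a finite index set I together with an edge map edge :: 'i => 'a set and capacities
cap :: 'i => real (parallel edges = distinct indices with equal edge sets).\<close>

definition hypergraph :: "'a set \<Rightarrow> 'i set \<Rightarrow> ('i \<Rightarrow> 'a set) \<Rightarrow> ('i \<Rightarrow> real) \<Rightarrow> bool" where
  "hypergraph V I edge cap \<longleftrightarrow> finite V \<and> finite I \<and>
     (\<forall>i\<in>I. edge i \<subseteq> V) \<and> (\<forall>i\<in>I. cap i \<ge> 0)"

definition dprime :: "'i set \<Rightarrow> ('i \<Rightarrow> 'a set) \<Rightarrow> ('i \<Rightarrow> real) \<Rightarrow> 'a set \<Rightarrow> 'a set \<Rightarrow> real" where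
  "dprime I edge cap A B =
     (\<Sum>i\<in>{i\<in>I. edge i \<inter> A \<noteq> {} \<and> edge i \<inter> B \<noteq> {} \<and> edge i \<subseteq> A \<union> B}. cap i)"

text \<open>An ordering v_1,...,v_n of V is a distinct list vs with set vs = V;
  v_i = vs ! (i - 1) and V_i = set (take i vs).\<close>
definition ordering_of :: "'a set \<Rightarrow> 'a list \<Rightarrow> bool" where
  "ordering_of V vs \<longleftrightarrow> distinct vs \<and> set vs = V"

definition tight_ordering :: "'a set \<Rightarrow> 'i set \<Rightarrow> ('i \<Rightarrow> 'a set) \<Rightarrow> ('i \<Rightarrow> real) \<Rightarrow> 'a list \<Rightarrow> bool" where
  "tight_ordering V I edge cap vs \<longleftrightarrow> ordering_of V vs \<and>
     (\<forall>i j. 1 \<le> i \<and> i < j \<and> j \<le> length vs \<longrightarrow>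
        dprime I edge cap (set (take (i - 1) vs)) {vs ! (i - 1)}
          \<ge> dprime I edge cap (set (take (i - 1) vs)) {vs ! (j - 1)})"

definition tight_edge :: "'a list \<Rightarrow> 'a set \<Rightarrow> 'a set" where
  "tight_edge vs e = set (take 2 (rev (filter (\<lambda>v. v \<in> e) vs)))"

end

theory Submission
  imports Defs
begin

text \<open>Split the ordering into the prefix \<open>V\<^sub>i\<close> and the remaining suffix, which contains
  \<open>v\<^sub>j\<close>. An edge \<open>e\<close> counted in \<open>d'(V\<^sub>i, v\<^sub>j; H)\<close> has \<open>v\<^sub>j\<close> as its last
  vertex and all others in \<open>V\<^sub>i\<close>, so its last two vertices are \<open>v\<^sub>j\<close> and a vertex
  of \<open>V\<^sub>i\<close>. Conversely, the last two vertices of \<open>e\<close> contain every vertex of \<open>e\<close>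
  that comes after one of them; if they meet \<open>V\<^sub>i\<close> and lie in \<open>V\<^sub>i \<union> {v\<^sub>j}\<close>, the
  only vertex of \<open>e\<close> outside \<open>V\<^sub>i\<close> is therefore \<open>v\<^sub>j\<close>.\<close>

definition joins :: "'a set \<Rightarrow> 'a set \<Rightarrow> 'a set \<Rightarrow> bool" where
  "joins e A B \<longleftrightarrow> e \<inter> A \<noteq> {} \<and> e \<inter> B \<noteq> {} \<and> e \<subseteq> A \<union> B"

lemma dprime_joins: "dprime I edge cap A B = (\<Sum>k\<in>{k\<in>I. joins (edge k) A B}. cap k)"
  unfolding dprime_def joins_def ..

lemma dprime_cong:
  assumes "\<And>k. k \<in> I \<Longrightarrow> joins (edge' k) A B \<longleftrightarrow> joins (edge k) A B"
  shows "dprime I edge' cap A B = dprime I edge cap A B"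
  unfolding dprime_joins using assms by (metis (mono_tags, lifting))

lemma tight_edge_subset: "tight_edge vs e \<subseteq> e"
  unfolding tight_edge_def by (auto dest: in_set_takeD)

lemma tight_edge_snoc:
  assumes "filter (\<lambda>x. x \<in> e) vs = us @ [v]" and "us \<noteq> []"
  shows "tight_edge vs e = {last us, v}"
proof -
  obtain ws u where "us = ws @ [u]"
    using \<open>us \<noteq> []\<close> by (cases us rule: rev_cases) auto
  then show ?thesis
    unfolding tight_edge_def assms(1) by auto
qed

lemma tight_edge_upward_closed:
  assumes "distinct (xs @ ys)"
    and "y \<in> set xs" and "y \<in> tight_edge (xs @ ys) e"
    and "x \<in> set ys" and "x \<in> e"
  shows "x \<in> tight_edge (xs @ ys) e"
proof -
  let ?F = "rev (filter (\<lambda>x. x \<in> e) ys)"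
  have T: "tight_edge (xs @ ys) e
      = set (take 2 ?F @ take (2 - length ?F) (rev (filter (\<lambda>x. x \<in> e) xs)))"
    unfolding tight_edge_def by (simp add: take_append)
  show ?thesis
  proof (cases "length ?F < 2")
    case True
    then show ?thesis using T assms(4,5) by simp
  next
    case False
    then have "tight_edge (xs @ ys) e \<subseteq> set ys"
      unfolding T by (auto dest: in_set_takeD)
    then show ?thesis using assms(1-3) by auto
  qed
qed

lemma filter_distinct_singleton:
  assumes "distinct xs" and "{x \<in> set xs. P x} = {v}"
  shows "filter P xs = [v]"
proof -
  have "set (filter P xs) = {v}" using assms(2) by auto
  moreover have "length (filter P xs) = 1"
    using distinct_card[of "filter P xs"] assms(1) calculation by simp
  ultimately show ?thesis by (cases "filter P xs") auto
qed

lemma joins_tight_edge_iff: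
  assumes "distinct (xs @ ys)" and "e \<subseteq> set (xs @ ys)" and "v \<in> set ys"
  shows "joins (tight_edge (xs @ ys) e) (set xs) {v} \<longleftrightarrow> joins e (set xs) {v}"
proof
  assume J: "joins (tight_edge (xs @ ys) e) (set xs) {v}"
  then obtain u where u: "u \<in> set xs" "u \<in> tight_edge (xs @ ys) e"
    unfolding joins_def by blast
  have "x \<in> set xs \<union> {v}" if "x \<in> e" for x
  proof (cases "x \<in> set xs")
    case False
    then have "x \<in> set ys" using that assms(2) by auto
    then have "x \<in> tight_edge (xs @ ys) e"
      using tight_edge_upward_closed[OF assms(1) u] that by blast
    then show ?thesis using J unfolding joins_def by blast
  qed simp
  moreover have "tight_edge (xs @ ys) e \<subseteq> e" by (rule tight_edge_subset)
  ultimately show "joins e (set xs) {v}"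
    using J unfolding joins_def by blast
next
  assume J: "joins e (set xs) {v}"
  have "{x \<in> set ys. x \<in> e} = {v}"
    using J assms(1,3) unfolding joins_def by auto
  then have "filter (\<lambda>x. x \<in> e) (xs @ ys) = filter (\<lambda>x. x \<in> e) xs @ [v]"
    using assms(1) by (simp add: filter_distinct_singleton)
  moreover have xs_e: "filter (\<lambda>x. x \<in> e) xs \<noteq> []"
    using J unfolding joins_def by (auto simp: filter_empty_conv)
  ultimately have "tight_edge (xs @ ys) e = {last (filter (\<lambda>x. x \<in> e) xs), v}"
    by (rule tight_edge_snoc)
  moreover have "last (filter (\<lambda>x. x \<in> e) xs) \<in> set xs \<inter> e"
    using last_in_set[OF xs_e] by auto
  ultimately show "joins (tight_edge (xs @ ys) e) (set xs) {v}"
    using J unfolding joins_def by auto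
qed

theorem mainTheorem17:
  fixes V :: "'a set" and I :: "'i set" and edge :: "'i \<Rightarrow> 'a set"
    and cap :: "'i \<Rightarrow> real" and vs :: "'a list"
  assumes "hypergraph V I edge cap"
    and "tight_ordering V I edge cap vs"
  shows "\<forall>i j. 1 \<le> i \<and> i < j \<and> j \<le> length vs \<longrightarrow>
           dprime I (\<lambda>k. tight_edge vs (edge k)) cap (set (take i vs)) {vs ! (j - 1)}
             = dprime I edge cap (set (take i vs)) {vs ! (j - 1)}"
proof (intro allI impI)
  fix i j assume ij: "1 \<le> i \<and> i < j \<and> j \<le> length vs"
  have "distinct vs" and edges: "\<And>k. k \<in> I \<Longrightarrow> edge k \<subseteq> set vs"
    using assms unfolding tight_ordering_def ordering_of_def hypergraph_def by auto
  have "vs ! (j - 1) \<in> set (drop i vs)"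
    using ij by (auto simp: in_set_conv_nth intro!: exI[of _ "j - 1 - i"])
  with \<open>distinct vs\<close> edges joins_tight_edge_iff[of "take i vs" "drop i vs"]
  show "dprime I (\<lambda>k. tight_edge vs (edge k)) cap (set (take i vs)) {vs ! (j - 1)}
      = dprime I edge cap (set (take i vs)) {vs ! (j - 1)}"
    by (intro dprime_cong) simp
qed

end
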